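(* Let $X$ be a nonnegative absolutely continuous random variable whose pdf $f$ is log-concave on $(0,\infty)$, and let $\overline F(t)=\mathbb P(X>t)$, $D=\{t\ge0:\overline F(t)>0\}$. For $t\in D$ let $X_t=[X-t\mid X>t]$ be the residual lifetime, with pdf $f_t(x)=f(x+t)/\overline F(t)$, $x>0$, and let $V(X_t)=\mathrm{Var}[\log f_t(X_t)]$ be its residual varentropy. Then $V(X_t)\le 1$ for all $t\in D$.
   Context: $[X\mid B]$ denotes a random variable distributed as $X$ conditional on the event $B$. A pdf $f$ is log-concave on $(0,\infty)$ if $\log f$ is concave there. *)

theory Defs
  imports "HOL-Probability.Probability"
begin

text \<open>Log-concavity of a nonnegative function on a set S, allowing zeros
  (i.e. concavity of the extended-real valued log f, with log 0 = -infinity).\<close>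
definition log_concave_on :: "real set \<Rightarrow> (real \<Rightarrow> real) \<Rightarrow> bool" where
  "log_concave_on S f \<longleftrightarrow> (\<forall>x\<in>S. 0 \<le> f x) \<and>
     (\<forall>x\<in>S. \<forall>y\<in>S. \<forall>u\<in>{0<..<1::real}.
        f x powr (1 - u) * f y powr u \<le> f ((1 - u) * x + u * y))"

definition surv :: "'a measure \<Rightarrow> ('a \<Rightarrow> real) \<Rightarrow> real \<Rightarrow> real" where
  "surv M X t = measure M {\<omega> \<in> space M. t < X \<omega>}"

definition surv_support :: "'a measure \<Rightarrow> ('a \<Rightarrow> real) \<Rightarrow> real set" where
  "surv_support M X = {t. 0 \<le> t \<and> surv M X t > 0}"

definition residual_pdf :: "'a measure \<Rightarrow> ('a \<Rightarrow> real) \<Rightarrow> (real \<Rightarrow> real) \<Rightarrow> real \<Rightarrow> real \<Rightarrow> real" where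
  "residual_pdf M X f t x = f (x + t) / surv M X t"

text \<open>Residual lifetime X_t = [X - t | X > t]: the random variable X - t on the
  probability space M conditioned on the event {X > t}.\<close>
definition cond_space :: "'a measure \<Rightarrow> ('a \<Rightarrow> real) \<Rightarrow> real \<Rightarrow> 'a measure" where
  "cond_space M X t = uniform_measure M {\<omega> \<in> space M. t < X \<omega>}"

definition residual_lifetime :: "('a \<Rightarrow> real) \<Rightarrow> real \<Rightarrow> 'a \<Rightarrow> real" where
  "residual_lifetime X t = (\<lambda>\<omega>. X \<omega> - t)"

definition residual_info :: "'a measure \<Rightarrow> ('a \<Rightarrow> real) \<Rightarrow> (real \<Rightarrow> real) \<Rightarrow> real \<Rightarrow> 'a \<Rightarrow> real" where
  "residual_info M X f t = (\<lambda>\<omega>. ln (residual_pdf M X f t (residual_lifetime X t \<omega>)))"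

definition residual_varentropy :: "'a measure \<Rightarrow> ('a \<Rightarrow> real) \<Rightarrow> (real \<Rightarrow> real) \<Rightarrow> real \<Rightarrow> real" where
  "residual_varentropy M X f t =
     prob_space.variance (cond_space M X t) (residual_info M X f t)"

end

theory Submission
  imports Defs "HOL-Real_Asymp.Real_Asymp"
begin

(* With K the supremum of f on (t, oo) and G = ln K - ln f, the residual information content
   is ln (K / S) - G (X), so V(X_t) is the conditional variance of G (X).  By log-concavity the
   superlevel sets {f >= K e^-u} are intervals whose length L(u) is increasing and concave in u.
   The layer-cake formula turns E[p(G)] into (K / S) * integral of k(u) L(u) over u >= 0 whenever
   the tail integral of k from w is p(w) e^-w; the kernels (u^2 + 2) e^-u and 4 u e^-u give
   p = G^2 + 2 G + 4 and p = 4 G + 4.  Their difference (u^2 - 4 u + 2) e^-u annihilates affine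
   functions and changes sign at 2 -+ sqrt 2, so comparing L with its chord through these two
   points yields E[G^2] <= 2 E[G], whence V(X_t) <= 2 E[G] - E[G]^2 <= 1. *)

section \<open>Log-concave and concave functions on the line\<close>

lemma log_concave_on_subset: "log_concave_on S f \<Longrightarrow> T \<subseteq> S \<Longrightarrow> log_concave_on T f"
  unfolding log_concave_on_def by blast

lemma log_concave_onD_lower:
  assumes "log_concave_on S f" and "x \<in> S" "y \<in> S" and "0 \<le> l" "l \<le> 1"
    and "0 < a" "a \<le> f x" and "0 < b" "b \<le> f y"
  shows "a powr (1 - l) * b powr l \<le> f ((1 - l) * x + l * y)"
proof (cases "l = 0 \<or> l = 1")
  case True
  then show ?thesis using assms by auto
next
  case False
  have "a powr (1 - l) * b powr l \<le> f x powr (1 - l) * f y powr l"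
    using assms by (intro mult_mono powr_mono2) auto
  also have "\<dots> \<le> f ((1 - l) * x + l * y)"
    using assms False unfolding log_concave_on_def by auto
  finally show ?thesis .
qed

lemma sqrt_mult_le_weighted_geometric_mean:
  fixes a b l :: real
  assumes "0 < a" "a \<le> b" "1/2 \<le> l" "l \<le> 1"
  shows "sqrt (a * b) \<le> a powr (1 - l) * b powr l"
proof -
  have "sqrt (a * b) = exp ((ln a + ln b) / 2)"
    using assms by (simp add: powr_half_sqrt[symmetric] powr_def ln_mult)
  also have "\<dots> \<le> exp ((1 - l) * ln a + l * ln b)"
  proof -
    have "0 \<le> (l - 1/2) * (ln b - ln a)" using assms by (intro mult_nonneg_nonneg) auto
    moreover have "(l - 1/2) * (ln b - ln a) = (1 - l) * ln a + l * ln b - (ln a + ln b) / 2"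
      by (simp add: field_simps)
    ultimately show ?thesis by simp
  qed
  also have "\<dots> = a powr (1 - l) * b powr l"
    using assms by (simp add: powr_def exp_add)
  finally show ?thesis .
qed

lemma cSup_convex_combination_le:
  fixes A B C :: "real set"
  assumes "A \<noteq> {}" "B \<noteq> {}" "bdd_above C" and l: "0 \<le> l" "l \<le> 1"
    and comb: "\<And>x y. x \<in> A \<Longrightarrow> y \<in> B \<Longrightarrow> (1 - l) * x + l * y \<in> C"
  shows "(1 - l) * Sup A + l * Sup B \<le> Sup C"
proof (rule ccontr)
  assume "\<not> ?thesis"
  then have d: "0 < (1 - l) * Sup A + l * Sup B - Sup C" (is "0 < ?d") by simp
  obtain x where x: "x \<in> A" "Sup A - ?d < x" using less_cSupD[OF assms(1)] d by force
  obtain y where y: "y \<in> B" "Sup B - ?d < y" using less_cSupD[OF assms(2)] d by force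
  have "(1 - l) * x + l * y \<le> Sup C" using comb[OF x(1) y(1)] assms(3) by (rule cSup_upper)
  moreover have "(1 - l) * (x - (Sup A - ?d)) + l * (y - (Sup B - ?d)) > 0"
    using x y l by (cases "l = 1") (auto intro: add_pos_nonneg add_nonneg_pos)
  ultimately show False by (simp add: algebra_simps)
qed

lemma convex_combination_ratio:
  fixes x y z :: real
  assumes "x \<noteq> y"
  shows "(1 - (z - x) / (y - x)) * x + (z - x) / (y - x) * y = z"
proof -
  define l where "l = (z - x) / (y - x)"
  have "l * (y - x) = z - x" using assms by (simp add: l_def)
  moreover have "(1 - l) * x + l * y = x + l * (y - x)" by (simp add: algebra_simps)
  ultimately have "(1 - l) * x + l * y = z" by simp
  then show ?thesis by (simp add: l_def)
qed

lemma concave_on_chord_sign: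
  fixes L :: "real \<Rightarrow> real"
  assumes L: "concave_on I L" and ab: "a \<in> I" "b \<in> I" "a < b" and u: "u \<in> I"
  shows "(u - a) * (u - b) * (L u - (L a + (L b - L a) / (b - a) * (u - a))) \<le> 0"
proof -
  define m where "m = (L b - L a) / (b - a)"
  define chord where "chord x = L a + m * (x - a)" for x
  have chord_comb: "chord ((1 - l) * x + l * y) = (1 - l) * chord x + l * chord y" for l x y
    by (simp add: chord_def algebra_simps)
  have chord_ab: "chord a = L a" "chord b = L b"
    using ab by (simp_all add: chord_def m_def)
  have conc: "(1 - l) * L x + l * L y \<le> L ((1 - l) * x + l * y)"
    if "x \<in> I" "y \<in> I" "0 \<le> l" "l \<le> 1" for x y l
    using concave_onD[OF L that(3,4,1,2)] by simp
  consider "u < a" | "a \<le> u" "u \<le> b" | "b < u" by linarith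
  then have "(u - a) * (u - b) * (L u - chord u) \<le> 0"
  proof cases
    case 1
    define l where "l = (a - u) / (b - u)"
    have l: "0 \<le> l" "l < 1" "(1 - l) * u + l * b = a"
      using 1 ab convex_combination_ratio[of u b a] by (auto simp: l_def field_simps)
    have "(1 - l) * (L u - chord u) \<le> 0"
      using conc[OF u ab(2), of l] chord_comb[of l u b] chord_ab l by (simp add: algebra_simps)
    then have "L u \<le> chord u" using l by (simp add: mult_le_0_iff)
    then show ?thesis using 1 ab by (intro mult_nonneg_nonpos) (auto intro: mult_nonpos_nonpos)
  next
    case 2
    show ?thesis
    proof (cases "a = u")
      case False
      define l where "l = (u - a) / (b - a)"
      have l: "0 \<le> l" "l \<le> 1" "(1 - l) * a + l * b = u"
        using 2 ab False convex_combination_ratio[of a b u] by (auto simp: l_def field_simps)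
      have "chord u \<le> L u"
        using conc[OF ab(1,2) l(1,2)] chord_comb[of l a b] chord_ab l by simp
      moreover have "(u - a) * (u - b) \<le> 0" using 2 by (simp add: mult_nonneg_nonpos)
      ultimately show ?thesis by (simp add: mult_nonpos_nonneg)
    qed (simp add: chord_ab)
  next
    case 3
    define l where "l = (b - a) / (u - a)"
    have l: "0 < l" "l \<le> 1" "(1 - l) * a + l * u = b"
      using 3 ab convex_combination_ratio[of a u b] by (auto simp: l_def field_simps)
    have "l * (L u - chord u) \<le> 0"
      using conc[OF ab(1) u, of l] chord_comb[of l a u] chord_ab l by (simp add: algebra_simps)
    then have "L u \<le> chord u" using l by (simp add: mult_le_0_iff)
    then show ?thesis using 3 ab by (intro mult_nonneg_nonpos) auto
  qed
  then show ?thesis by (simp add: chord_def m_def)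
qed

lemma concave_mono_le_affine:
  fixes L :: "real \<Rightarrow> real"
  assumes "concave_on {0<..} L" "mono L" "0 \<le> u"
  shows "L u \<le> L 2 + (L 2 - L 1) * u"
proof (cases "u \<le> 2")
  case True
  then show ?thesis using assms monoD[OF assms(2), of 1 2] monoD[OF assms(2), of u 2]
    by (simp add: add_increasing2)
next
  case False
  have "(u - 1) * (u - 2) * (L u - (L 1 + (L 2 - L 1) * (u - 1))) \<le> 0"
    using concave_on_chord_sign[OF assms(1), of 1 2 u] False by simp
  moreover have "0 < (u - 1) * (u - 2)" using False by simp
  ultimately have "L u \<le> L 1 + (L 2 - L 1) * (u - 1)"
    using mult_le_cancel_left_pos[of "(u - 1) * (u - 2)" _ 0] by simp
  then show ?thesis using monoD[OF assms(2), of 1 2] by (simp add: algebra_simps)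
qed

section \<open>Exponential kernels\<close>

definition kernel_sq :: "real \<Rightarrow> real" where
  "kernel_sq u = (u\<^sup>2 + 2) * exp (- u)"

definition kernel_lin :: "real \<Rightarrow> real" where
  "kernel_lin u = 4 * u * exp (- u)"

lemma kernel_sq_measurable [measurable]: "kernel_sq \<in> borel_measurable borel"
  unfolding kernel_sq_def by measurable

lemma kernel_lin_measurable [measurable]: "kernel_lin \<in> borel_measurable borel"
  unfolding kernel_lin_def by measurable

lemma kernel_sq_nonneg: "0 \<le> kernel_sq u"
  by (simp add: kernel_sq_def add_nonneg_pos)

lemma kernel_lin_nonneg: "0 \<le> u \<Longrightarrow> 0 \<le> kernel_lin u"
  by (simp add: kernel_lin_def)

lemma nn_integral_tail_kernel_sq:
  "(\<integral>\<^sup>+u. indicator {w..} u * ennreal (kernel_sq u) \<partial>lborel) = ennreal ((w\<^sup>2 + 2 * w + 4) * exp (- w))"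
proof -
  have "(\<integral>\<^sup>+u. indicator {w..} u * ennreal (kernel_sq u) \<partial>lborel)
      = (\<integral>\<^sup>+u. ennreal (kernel_sq u) * indicator {w..} u \<partial>lborel)"
    by (simp add: mult.commute)
  also have "\<dots> = ennreal (0 - (- ((w\<^sup>2 + 2 * w + 4) * exp (- w))))"
  proof (rule nn_integral_FTC_atLeast)
    show "DERIV (\<lambda>u. - ((u\<^sup>2 + 2 * u + 4) * exp (- u))) x :> kernel_sq x" for x
      by (auto intro!: derivative_eq_intros simp: kernel_sq_def algebra_simps power2_eq_square)
    show "((\<lambda>u::real. - ((u\<^sup>2 + 2 * u + 4) * exp (- u))) \<longlongrightarrow> 0) at_top"
      by real_asymp
  qed (auto simp: kernel_sq_nonneg)
  finally show ?thesis by simp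
qed

lemma nn_integral_tail_kernel_lin:
  assumes "0 \<le> w"
  shows "(\<integral>\<^sup>+u. indicator {w..} u * ennreal (kernel_lin u) \<partial>lborel) = ennreal ((4 * w + 4) * exp (- w))"
proof -
  have "(\<integral>\<^sup>+u. indicator {w..} u * ennreal (kernel_lin u) \<partial>lborel)
      = (\<integral>\<^sup>+u. ennreal (kernel_lin u) * indicator {w..} u \<partial>lborel)"
    by (simp add: mult.commute)
  also have "\<dots> = ennreal (0 - (- ((4 * w + 4) * exp (- w))))"
  proof (rule nn_integral_FTC_atLeast)
    show "DERIV (\<lambda>u. - ((4 * u + 4) * exp (- u))) x :> kernel_lin x" for x
      by (auto intro!: derivative_eq_intros simp: kernel_lin_def algebra_simps)
    show "((\<lambda>u::real. - ((4 * u + 4) * exp (- u))) \<longlongrightarrow> 0) at_top"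
      by real_asymp
  qed (use assms in \<open>auto simp: kernel_lin_nonneg\<close>)
  finally show ?thesis by simp
qed

definition gamma_kernel :: "nat \<Rightarrow> real \<Rightarrow> real" where
  "gamma_kernel j u = indicator {0..} u * (u ^ j * exp (- u))"

lemma gamma_kernel_measurable [measurable]: "gamma_kernel j \<in> borel_measurable borel"
  unfolding gamma_kernel_def by measurable

lemma gamma_kernel_nonneg: "0 \<le> gamma_kernel j u"
  by (simp add: gamma_kernel_def split: split_indicator)

lemma nn_integral_gamma_kernel: "(\<integral>\<^sup>+u. ennreal (gamma_kernel j u) \<partial>lborel) = ennreal (fact j)"
proof -
  have "(\<integral>\<^sup>+u. ennreal (gamma_kernel j u) \<partial>lborel) = (\<integral>\<^sup>+u. ennreal (u ^ j * exp (- u)) * indicator {0..} u \<partial>lborel)"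
    by (intro nn_integral_cong) (auto simp: gamma_kernel_def split: split_indicator)
  then show ?thesis by (simp add: nn_intergal_power_times_exp_Ici)
qed

lemma integrable_gamma_kernel [simp]: "integrable lborel (gamma_kernel j)"
  by (rule integrableI_nn_integral_finite[where x="fact j"])
    (auto simp: nn_integral_gamma_kernel gamma_kernel_nonneg)

lemma integral_gamma_kernel: "(\<integral>u. gamma_kernel j u \<partial>lborel) = fact j"
  by (subst integral_eq_nn_integral) (auto simp: nn_integral_gamma_kernel gamma_kernel_nonneg)

lemma kernel_sq_times_affine:
  "indicator {0..} u * kernel_sq u * (c + d * u)
     = c * (gamma_kernel 2 u + 2 * gamma_kernel 0 u) + d * (gamma_kernel 3 u + 2 * gamma_kernel 1 u)"
  by (simp add: kernel_sq_def gamma_kernel_def algebra_simps power2_eq_square power3_eq_cube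
      split: split_indicator)

lemma kernel_lin_times_affine:
  "indicator {0..} u * kernel_lin u * (c + d * u) = 4 * c * gamma_kernel 1 u + 4 * d * gamma_kernel 2 u"
  by (simp add: kernel_lin_def gamma_kernel_def algebra_simps power2_eq_square split: split_indicator)

lemma integral_kernel_sq_affine:
  "integrable lborel (\<lambda>u. indicator {0..} u * kernel_sq u * (c + d * u))"
  "(\<integral>u. indicator {0..} u * kernel_sq u * (c + d * u) \<partial>lborel) = 4 * c + 8 * d"
  unfolding kernel_sq_times_affine by (auto simp: integral_gamma_kernel fact_numeral)

lemma integral_kernel_lin_affine:
  "integrable lborel (\<lambda>u. indicator {0..} u * kernel_lin u * (c + d * u))"
  "(\<integral>u. indicator {0..} u * kernel_lin u * (c + d * u) \<partial>lborel) = 4 * c + 8 * d"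
  unfolding kernel_lin_times_affine by (auto simp: integral_gamma_kernel fact_numeral)

lemma integrable_kernel_mult_concave:
  fixes k L :: "real \<Rightarrow> real"
  assumes conc: "concave_on {0<..} L" and mono: "mono L" and nonneg: "\<And>u. 0 \<le> L u"
    and [measurable]: "k \<in> borel_measurable borel" and k: "\<And>u. 0 \<le> u \<Longrightarrow> 0 \<le> k u"
    and affine: "\<And>c d. integrable lborel (\<lambda>u. indicator {0..} u * k u * (c + d * u))"
  shows "integrable lborel (\<lambda>u. indicator {0..} u * k u * L u)"
proof (rule Bochner_Integration.integrable_bound[OF affine])
  show "(\<lambda>u. indicator {0..} u * k u * L u) \<in> borel_measurable lborel"
    using borel_measurable_mono[OF mono] by measurable
  show "AE u in lborel. norm (indicator {0..} u * k u * L u)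
      \<le> norm (indicator {0..} u * k u * (L 2 + (L 2 - L 1) * u))"
  proof (intro AE_I2)
    fix u :: real
    show "norm (indicator {0..} u * k u * L u) \<le> norm (indicator {0..} u * k u * (L 2 + (L 2 - L 1) * u))"
      using concave_mono_le_affine[OF conc mono, of u] k[of u] nonneg[of u]
      by (cases "0 \<le> u") (simp_all add: mult_left_mono)
  qed
qed

text \<open>The witness is the chord of \<open>L\<close> through the roots \<open>2 \<mp> \<surd>2\<close> of \<open>u\<^sup>2 - 4 u + 2\<close>:
  the concave \<open>L\<close> lies above it exactly between the roots, where the kernel difference is negative.\<close>

lemma kernel_difference_affine_sign:
  fixes L :: "real \<Rightarrow> real"
  assumes conc: "concave_on {0<..} L"
  shows "\<exists>c d. \<forall>u>0. (kernel_sq u - kernel_lin u) * (L u - (c + d * u)) \<le> 0"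
proof -
  define r1 r2 :: real where "r1 = 2 - sqrt 2" and "r2 = 2 + sqrt 2"
  have "sqrt 2 < sqrt (2\<^sup>2)" by (subst real_sqrt_less_iff) simp
  then have r: "0 < r1" "r1 < r2" by (simp_all add: r1_def r2_def)
  define d where "d = (L r2 - L r1) / (r2 - r1)"
  have "(kernel_sq u - kernel_lin u) * (L u - ((L r1 - d * r1) + d * u)) \<le> 0" if u: "0 < u" for u
  proof -
    have chord: "(u - r1) * (u - r2) * (L u - (L r1 + d * (u - r1))) \<le> 0"
      using concave_on_chord_sign[OF conc, of r1 r2 u] r u by (simp add: d_def)
    have roots: "(u - r1) * (u - r2) = u\<^sup>2 - 4 * u + 2"
      by (simp add: r1_def r2_def algebra_simps power2_eq_square)
    have kernels: "kernel_sq u - kernel_lin u = exp (- u) * ((u - r1) * (u - r2))"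
      unfolding roots by (simp add: kernel_sq_def kernel_lin_def algebra_simps)
    have eq: "(kernel_sq u - kernel_lin u) * (L u - ((L r1 - d * r1) + d * u))
        = exp (- u) * ((u - r1) * (u - r2) * (L u - (L r1 + d * (u - r1))))"
      by (simp only: kernels) (simp add: algebra_simps)
    show ?thesis
      unfolding eq by (rule mult_nonneg_nonpos[OF _ chord]) simp
  qed
  then show ?thesis by blast
qed

lemma integral_kernel_sq_le_kernel_lin:
  fixes L :: "real \<Rightarrow> real"
  assumes conc: "concave_on {0<..} L" and mono: "mono L" and nonneg: "\<And>u. 0 \<le> L u"
  shows "integrable lborel (\<lambda>u. indicator {0..} u * kernel_sq u * L u)"
    and "integrable lborel (\<lambda>u. indicator {0..} u * kernel_lin u * L u)"
    and "(\<integral>u. indicator {0..} u * kernel_sq u * L u \<partial>lborel)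
           \<le> (\<integral>u. indicator {0..} u * kernel_lin u * L u \<partial>lborel)"
proof -
  show int_sq: "integrable lborel (\<lambda>u. indicator {0..} u * kernel_sq u * L u)"
    using assms by (rule integrable_kernel_mult_concave) (simp_all add: kernel_sq_nonneg integral_kernel_sq_affine)
  show int_lin: "integrable lborel (\<lambda>u. indicator {0..} u * kernel_lin u * L u)"
    using assms by (rule integrable_kernel_mult_concave) (simp_all add: kernel_lin_nonneg integral_kernel_lin_affine)
  obtain c d where cd: "\<And>u. 0 < u \<Longrightarrow> (kernel_sq u - kernel_lin u) * (L u - (c + d * u)) \<le> 0"
    using kernel_difference_affine_sign[OF conc] by blast
  have "(\<integral>u. indicator {0..} u * kernel_sq u * L u + indicator {0..} u * kernel_lin u * (c + d * u) \<partial>lborel)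
     \<le> (\<integral>u. indicator {0..} u * kernel_lin u * L u + indicator {0..} u * kernel_sq u * (c + d * u) \<partial>lborel)"
  proof (rule integral_mono_AE)
    show "AE u in lborel. indicator {0..} u * kernel_sq u * L u + indicator {0..} u * kernel_lin u * (c + d * u)
        \<le> indicator {0..} u * kernel_lin u * L u + indicator {0..} u * kernel_sq u * (c + d * u)"
      using AE_lborel_singleton[of 0]
    proof eventually_elim
      case (elim u)
      then show ?case
        using cd[of u] by (cases "0 < u") (simp_all add: algebra_simps)
    qed
  qed (simp_all add: int_sq int_lin integral_kernel_sq_affine integral_kernel_lin_affine)
  then show "(\<integral>u. indicator {0..} u * kernel_sq u * L u \<partial>lborel)
      \<le> (\<integral>u. indicator {0..} u * kernel_lin u * L u \<partial>lborel)"
    using int_sq int_lin by (simp add: integral_kernel_sq_affine integral_kernel_lin_affine)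
qed

lemma nn_integral_layer_cake:
  fixes G :: "real \<Rightarrow> real" and k :: "real \<Rightarrow> ennreal"
  assumes [measurable]: "G \<in> borel_measurable borel" "k \<in> borel_measurable borel" "D \<in> sets borel"
    and G_nonneg: "\<And>x. x \<in> D \<Longrightarrow> 0 \<le> G x"
  shows "(\<integral>\<^sup>+x. indicator D x * (\<integral>\<^sup>+u. indicator {G x..} u * k u \<partial>lborel) \<partial>lborel)
       = (\<integral>\<^sup>+u. indicator {0..} u * k u * emeasure lborel {x \<in> D. G x \<le> u} \<partial>lborel)"
proof -
  let ?h = "\<lambda>x u. indicator {0..} u * k u * indicator {x \<in> D. G x \<le> u} x"
  have "(\<integral>\<^sup>+u. indicator {0..} u * k u * emeasure lborel {x \<in> D. G x \<le> u} \<partial>lborel)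
      = (\<integral>\<^sup>+u. (\<integral>\<^sup>+x. ?h x u \<partial>lborel) \<partial>lborel)"
    by (simp add: nn_integral_cmult_indicator)
  also have "\<dots> = (\<integral>\<^sup>+x. (\<integral>\<^sup>+u. ?h x u \<partial>lborel) \<partial>lborel)"
    by (rule lborel_pair.Fubini') measurable
  also have "\<dots> = (\<integral>\<^sup>+x. indicator D x * (\<integral>\<^sup>+u. indicator {G x..} u * k u \<partial>lborel) \<partial>lborel)"
  proof (intro nn_integral_cong)
    fix x
    show "(\<integral>\<^sup>+u. ?h x u \<partial>lborel) = indicator D x * (\<integral>\<^sup>+u. indicator {G x..} u * k u \<partial>lborel)"
      using G_nonneg[of x] by (cases "x \<in> D") (auto intro!: nn_integral_cong split: split_indicator)
  qed
  finally show ?thesis ..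
qed

section \<open>Superlevel sets of a log-concave tail density\<close>

locale log_concave_tail =
  fixes f :: "real \<Rightarrow> real" and t S :: real
  assumes nonneg: "\<And>x. 0 \<le> f x"
    and measurable_f [measurable]: "f \<in> borel_measurable borel"
    and log_concave: "log_concave_on {t<..} f"
    and tail_mass: "(\<integral>\<^sup>+x. ennreal (f x) * indicator {t<..} x \<partial>lborel) = ennreal S"
    and tail_mass_pos: "0 < S"
begin

lemma lower_bound_times_length_le_mass:
  assumes "t < a" "a \<le> b" "0 \<le> m" "\<And>z. a \<le> z \<Longrightarrow> z \<le> b \<Longrightarrow> m \<le> f z"
  shows "m * (b - a) \<le> S"
proof -
  have "ennreal (m * (b - a)) = (\<integral>\<^sup>+x. ennreal m * indicator {a..b} x \<partial>lborel)"
    using assms by (simp add: nn_integral_cmult_indicator ennreal_mult)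
  also have "\<dots> \<le> (\<integral>\<^sup>+x. ennreal (f x) * indicator {t<..} x \<partial>lborel)"
    using assms by (intro nn_integral_mono) (auto split: split_indicator intro: ennreal_leI)
  finally show ?thesis using tail_mass tail_mass_pos by simp
qed

lemma two_positive_points: "\<exists>x y. t < x \<and> x < y \<and> 0 < f x \<and> 0 < f y"
proof (rule ccontr)
  assume no_two: "\<not> ?thesis"
  have "AE x in lborel. ennreal (f x) * indicator {t<..} x = 0"
  proof (cases "\<exists>a. t < a \<and> 0 < f a")
    case False
    then show ?thesis using nonneg by (intro AE_I2) (auto split: split_indicator simp: less_le)
  next
    case True
    then obtain a where a: "t < a" "0 < f a" by auto
    show ?thesis
      using AE_lborel_singleton[of a]
    proof eventually_elim
      case (elim x)
      have "\<not> (t < x \<and> 0 < f x)"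
        using no_two a elim by (cases "x < a") (auto simp: neq_iff)
      then show ?case using nonneg[of x] by (auto split: split_indicator simp: less_le)
    qed
  qed
  then have "(\<integral>\<^sup>+x. ennreal (f x) * indicator {t<..} x \<partial>lborel) = 0"
    by (simp add: nn_integral_0_iff_AE)
  then show False using tail_mass tail_mass_pos by simp
qed

text \<open>Log-concavity bounds \<open>f\<close> below by \<open>\<surd>(a b)\<close> on the half of \<open>[p, q]\<close> next to \<open>q\<close>.\<close>

lemma sqrt_mult_half_dist_le_mass:
  assumes p: "t < p" and q: "t < q" and ab: "0 < a" "a \<le> b" "a \<le> f p" "b \<le> f q"
  shows "sqrt (a * b) * (\<bar>q - p\<bar> / 2) \<le> S"
proof (cases "p = q")
  case True
  then show ?thesis using tail_mass_pos by simp
next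
  case False
  define m where "m = (p + q) / 2"
  have "sqrt (a * b) \<le> f z" if z: "min m q \<le> z" "z \<le> max m q" for z
  proof -
    define l where "l = (z - p) / (q - p)"
    have l: "1/2 \<le> l" "l \<le> 1"
      using z False by (auto simp: l_def m_def le_divide_eq divide_le_eq min_def max_def split: if_splits)
    have "sqrt (a * b) \<le> a powr (1 - l) * b powr l"
      using ab l by (intro sqrt_mult_le_weighted_geometric_mean) auto
    also have "\<dots> \<le> f ((1 - l) * p + l * q)"
      using ab l p q by (intro log_concave_onD_lower[OF log_concave]) auto
    also have "(1 - l) * p + l * q = z"
      unfolding l_def using False by (rule convex_combination_ratio)
    finally show ?thesis .
  qed
  then have "sqrt (a * b) * (max m q - min m q) \<le> S"
    using p q ab by (intro lower_bound_times_length_le_mass) (auto simp: m_def)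
  moreover have "max m q - min m q = \<bar>q - p\<bar> / 2"
    by (simp add: m_def max_def min_def abs_if field_simps)
  ultimately show ?thesis by simp
qed

lemma bdd_above_tail: "bdd_above (f ` {t<..})"
proof -
  obtain x1 x2 where x: "t < x1" "x1 < x2" "0 < f x1" "0 < f x2"
    using two_positive_points by blast
  define c where "c = min (f x1) (f x2)"
  define d where "d = x2 - x1"
  have c: "0 < c" and d: "0 < d" using x by (auto simp: c_def d_def)
  have "f y \<le> max c (16 * S\<^sup>2 / (d\<^sup>2 * c))" if y: "t < y" for y
  proof (cases "f y \<le> c")
    case False
    have "d / 2 \<le> \<bar>y - x1\<bar> \<or> d / 2 \<le> \<bar>y - x2\<bar>" using d_def by linarith
    then obtain x where "x = x1 \<or> x = x2" and far: "d / 2 \<le> \<bar>y - x\<bar>" by blast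
    then have x: "t < x" "c \<le> f x" "d / 2 \<le> \<bar>y - x\<bar>" using x by (auto simp: c_def)
    have "sqrt (c * f y) * (\<bar>y - x\<bar> / 2) \<le> S"
      using x y c False by (intro sqrt_mult_half_dist_le_mass) auto
    moreover have "sqrt (c * f y) * (d / 4) \<le> sqrt (c * f y) * (\<bar>y - x\<bar> / 2)"
      using x c nonneg[of y] by (intro mult_left_mono) auto
    ultimately have "sqrt (c * f y) * d \<le> 4 * S" by (simp add: algebra_simps)
    then have "(sqrt (c * f y) * d)\<^sup>2 \<le> (4 * S)\<^sup>2"
      using d c nonneg[of y] by (intro power_mono) auto
    then have "c * f y * d\<^sup>2 \<le> 16 * S\<^sup>2"
      using c nonneg[of y] by (simp add: power_mult_distrib)
    then have "f y \<le> 16 * S\<^sup>2 / (d\<^sup>2 * c)" using c d by (simp add: field_simps)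
    then show ?thesis by simp
  qed simp
  then show ?thesis by (intro bdd_aboveI2) simp
qed

definition peak :: real where
  "peak = Sup (f ` {t<..})"

lemma le_peak: "t < y \<Longrightarrow> f y \<le> peak"
  using bdd_above_tail unfolding peak_def by (intro cSup_upper) auto

lemma peak_pos: "0 < peak"
  using two_positive_points le_peak by force

lemma less_peak_imp: "v < peak \<Longrightarrow> \<exists>y. t < y \<and> v < f y"
  using less_cSupD[of "f ` {t<..}" v] unfolding peak_def by auto

definition superlevel :: "real \<Rightarrow> real set" where
  "superlevel u = {x. t < x \<and> peak * exp (- u) \<le> f x}"

lemma superlevel_measurable [measurable]: "superlevel u \<in> sets borel"
  unfolding superlevel_def by measurable

lemma superlevel_mono: "u \<le> v \<Longrightarrow> superlevel u \<subseteq> superlevel v"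
  using peak_pos unfolding superlevel_def by (auto elim!: order_trans[rotated])

lemma superlevel_nonempty: "0 < u \<Longrightarrow> superlevel u \<noteq> {}"
  using less_peak_imp[of "peak * exp (- u)"] peak_pos by (auto simp: superlevel_def)

lemma superlevel_convex_combination:
  assumes x: "x \<in> superlevel s" and y: "y \<in> superlevel r" and l: "0 \<le> l" "l \<le> 1"
  shows "(1 - l) * x + l * y \<in> superlevel ((1 - l) * s + l * r)"
proof -
  have "(peak * exp (- s)) powr (1 - l) * (peak * exp (- r)) powr l \<le> f ((1 - l) * x + l * y)"
    using x y l peak_pos
    by (intro log_concave_onD_lower[OF log_concave]) (auto simp: superlevel_def)
  moreover have "(peak * exp (- s)) powr (1 - l) * (peak * exp (- r)) powr l
      = exp ((1 - l) * (ln peak - s) + l * (ln peak - r))"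
    using peak_pos by (simp add: powr_def ln_mult exp_add)
  moreover have "\<dots> = exp (ln peak) * exp (- ((1 - l) * s + l * r))"
    by (simp add: exp_add[symmetric] algebra_simps)
  moreover have "(1 - l) * - x + l * - y < - t"
    using x y l by (intro convex_bound_lt) (auto simp: superlevel_def)
  ultimately show ?thesis using peak_pos by (simp add: superlevel_def)
qed

lemma superlevel_between:
  assumes "x \<in> superlevel u" "y \<in> superlevel u" "x \<le> z" "z \<le> y"
  shows "z \<in> superlevel u"
proof (cases "x = y")
  case False
  define l where "l = (z - x) / (y - x)"
  have l: "0 \<le> l" "l \<le> 1" using assms False by (auto simp: l_def field_simps)
  have "(1 - l) * x + l * y = z"
    unfolding l_def using False by (rule convex_combination_ratio)
  moreover have "(1 - l) * u + l * u = u" by (simp add: algebra_simps)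
  ultimately show ?thesis using superlevel_convex_combination[OF assms(1,2) l] by simp
qed (use assms in simp)

lemma superlevel_width_le_mass:
  assumes "x \<in> superlevel u" "y \<in> superlevel u" "x \<le> y"
  shows "peak * exp (- u) * (y - x) \<le> S"
  using assms peak_pos superlevel_between[OF assms(1,2)]
  by (intro lower_bound_times_length_le_mass) (auto simp: superlevel_def)

lemma emeasure_superlevel_le_mass:
  "ennreal (peak * exp (- u)) * emeasure lborel (superlevel u) \<le> ennreal S"
proof -
  have "ennreal (peak * exp (- u)) * emeasure lborel (superlevel u)
      = (\<integral>\<^sup>+x. ennreal (peak * exp (- u)) * indicator (superlevel u) x \<partial>lborel)"
    by (simp add: nn_integral_cmult_indicator)
  also have "\<dots> \<le> (\<integral>\<^sup>+x. ennreal (f x) * indicator {t<..} x \<partial>lborel)"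
    by (intro nn_integral_mono) (auto simp: superlevel_def split: split_indicator intro: ennreal_leI)
  finally show ?thesis using tail_mass by simp
qed

lemma emeasure_superlevel_finite: "emeasure lborel (superlevel u) < \<infinity>"
  using emeasure_superlevel_le_mass[of u] peak_pos
  by (auto simp: less_top[symmetric] ennreal_mult_top top_unique)

definition level_length :: "real \<Rightarrow> real" where
  "level_length u = measure lborel (superlevel u)"

lemma emeasure_superlevel: "emeasure lborel (superlevel u) = ennreal (level_length u)"
  using emeasure_superlevel_finite[of u]
  by (simp add: level_length_def emeasure_eq_ennreal_measure less_top)

lemma level_length_nonneg: "0 \<le> level_length u"
  by (simp add: level_length_def)

lemma mono_level_length: "mono level_length"
  unfolding level_length_def mono_def using superlevel_mono emeasure_superlevel_finite
  by (intro allI impI measure_mono_fmeasurable) (auto simp: fmeasurable_def)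

lemma bdd_below_superlevel: "bdd_below (superlevel u)"
  by (rule bdd_belowI[of _ t]) (auto simp: superlevel_def)

lemma bdd_above_superlevel: "bdd_above (superlevel u)"
proof (cases "superlevel u = {}")
  case False
  then obtain x0 where x0: "x0 \<in> superlevel u" by auto
  have c: "0 < peak * exp (- u)" using peak_pos by simp
  have "y \<le> x0 + S / (peak * exp (- u))" if y: "y \<in> superlevel u" for y
  proof (cases "x0 \<le> y")
    case True
    have "y - x0 \<le> S / (peak * exp (- u))"
      using superlevel_width_le_mass[OF x0 y True] c by (simp add: le_divide_eq mult.commute)
    then show ?thesis by simp
  qed (use c tail_mass_pos in \<open>simp add: add_increasing2\<close>)
  then show ?thesis by (rule bdd_aboveI)
qed simp

lemma level_length_eq_Sup_minus_Inf:
  assumes "0 < u"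
  shows "level_length u = Sup (superlevel u) - Inf (superlevel u)"
proof -
  let ?A = "superlevel u"
  have ne: "?A \<noteq> {}" using superlevel_nonempty[OF assms] .
  have lower: "Inf ?A \<le> x" and upper: "x \<le> Sup ?A" if "x \<in> ?A" for x
    using that bdd_below_superlevel bdd_above_superlevel by (auto intro: cInf_lower cSup_upper)
  then have le: "Inf ?A \<le> Sup ?A" using ne by (meson all_not_in_conv order_trans)
  have inner: "{Inf ?A <..< Sup ?A} \<subseteq> ?A"
  proof
    fix z assume z: "z \<in> {Inf ?A <..< Sup ?A}"
    obtain x where x: "x \<in> ?A" "x < z" using cInf_lessD[OF ne, of z] z by auto
    obtain y where y: "y \<in> ?A" "z < y" using less_cSupD[OF ne, of z] z by auto
    show "z \<in> ?A" using superlevel_between[OF x(1) y(1)] x y by simp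
  qed
  have outer: "?A \<subseteq> {Inf ?A .. Sup ?A}" using lower upper by auto
  have "measure lborel {Inf ?A <..< Sup ?A} \<le> level_length u"
    unfolding level_length_def using inner emeasure_superlevel_finite[of u]
    by (intro measure_mono_fmeasurable) (auto simp: fmeasurable_def)
  moreover have "level_length u \<le> measure lborel {Inf ?A .. Sup ?A}"
    unfolding level_length_def using outer le
    by (intro measure_mono_fmeasurable) (auto simp: fmeasurable_def)
  ultimately show ?thesis using le by simp
qed

text \<open>One-dimensional Brunn--Minkowski: the right end of \<open>superlevel u\<close> is concave and the left
  end convex in \<open>u\<close>.\<close>

lemma concave_level_length: "concave_on {0<..} level_length"
proof (rule concave_on_linorderI)
  fix l s r :: real
  assume l: "0 < l" "l < 1" and sr: "s \<in> {0<..}" "r \<in> {0<..}"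
  let ?u = "(1 - l) * s + l * r"
  have u: "0 < ?u" using l sr by (intro add_pos_pos) auto
  have right: "(1 - l) * Sup (superlevel s) + l * Sup (superlevel r) \<le> Sup (superlevel ?u)"
    using sr l superlevel_nonempty bdd_above_superlevel
    by (intro cSup_convex_combination_le superlevel_convex_combination) auto
  have "(1 - l) * Sup (uminus ` superlevel s) + l * Sup (uminus ` superlevel r)
      \<le> Sup (uminus ` superlevel ?u)"
  proof (rule cSup_convex_combination_le)
    show "bdd_above (uminus ` superlevel ?u)"
      using bdd_below_superlevel by (simp add: bdd_above_uminus_image)
    fix x y assume "x \<in> uminus ` superlevel s" "y \<in> uminus ` superlevel r"
    then have "- ((1 - l) * - x + l * - y) \<in> uminus ` superlevel ?u"
      using l by (intro imageI superlevel_convex_combination) auto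
    then show "(1 - l) * x + l * y \<in> uminus ` superlevel ?u" by (simp add: add.commute)
  qed (use sr l superlevel_nonempty in auto)
  then have left: "Inf (superlevel ?u) \<le> (1 - l) * Inf (superlevel s) + l * Inf (superlevel r)"
    by (simp add: Inf_real_def)
  have "(1 - l) * level_length s + l * level_length r
      = ((1 - l) * Sup (superlevel s) + l * Sup (superlevel r))
        - ((1 - l) * Inf (superlevel s) + l * Inf (superlevel r))"
    using sr by (simp add: level_length_eq_Sup_minus_Inf right_diff_distrib)
  also have "\<dots> \<le> level_length ?u"
    using right left level_length_eq_Sup_minus_Inf[OF u] by linarith
  finally show "(1 - l) * level_length s + l * level_length r \<le> level_length ((1 - l) *\<^sub>R s + l *\<^sub>R r)"
    by simp
qed simp

definition deficit :: "real \<Rightarrow> real" where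
  "deficit x = ln peak - ln (f x)"

lemma deficit_measurable [measurable]: "deficit \<in> borel_measurable borel"
  unfolding deficit_def by measurable

lemma deficit_nonneg: "t < x \<Longrightarrow> 0 < f x \<Longrightarrow> 0 \<le> deficit x"
  using le_peak[of x] by (simp add: deficit_def)

lemma peak_exp_deficit: "0 < f x \<Longrightarrow> peak * exp (- deficit x) = f x"
  using peak_pos by (simp add: deficit_def exp_diff)

lemma superlevel_eq_deficit_le: "superlevel u = {x \<in> {x. t < x \<and> 0 < f x}. deficit x \<le> u}"
proof -
  have "x \<in> superlevel u \<longleftrightarrow> deficit x \<le> u" if "t < x" "0 < f x" for x
  proof -
    have "peak * exp (- u) \<le> f x \<longleftrightarrow> ln (peak * exp (- u)) \<le> ln (f x)"
      using peak_pos that by (subst ln_le_cancel_iff) auto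
    then show ?thesis using peak_pos that by (auto simp: superlevel_def deficit_def ln_mult)
  qed
  moreover have "0 < f x" if "x \<in> superlevel u" for x
    using that peak_pos by (auto simp: superlevel_def intro: less_le_trans[rotated])
  ultimately show ?thesis by (auto simp: superlevel_def)
qed

lemma ennreal_tail_weight_eq_layers:
  fixes k p :: "real \<Rightarrow> real"
  assumes [measurable]: "k \<in> borel_measurable borel" and p_nonneg: "\<And>w. 0 \<le> w \<Longrightarrow> 0 \<le> p w"
    and tail: "\<And>w. 0 \<le> w \<Longrightarrow>
      (\<integral>\<^sup>+u. indicator {w..} u * ennreal (k u) \<partial>lborel) = ennreal (p w * exp (- w))"
  shows "ennreal (indicator {t<..} x * f x * p (deficit x))
    = indicator {x. t < x \<and> 0 < f x} x * (\<integral>\<^sup>+u. indicator {deficit x..} u * ennreal (peak * k u) \<partial>lborel)"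
proof (cases "t < x \<and> 0 < f x")
  case True
  then have G: "0 \<le> deficit x" by (intro deficit_nonneg) auto
  have "(\<integral>\<^sup>+u. indicator {deficit x..} u * ennreal (peak * k u) \<partial>lborel)
      = (\<integral>\<^sup>+u. ennreal peak * (indicator {deficit x..} u * ennreal (k u)) \<partial>lborel)"
    using peak_pos by (intro nn_integral_cong) (simp add: ennreal_mult' mult.left_commute)
  also have "\<dots> = ennreal peak * (\<integral>\<^sup>+u. indicator {deficit x..} u * ennreal (k u) \<partial>lborel)"
    by (rule nn_integral_cmult) measurable
  also have "\<dots> = ennreal (peak * (p (deficit x) * exp (- deficit x)))"
    using tail[OF G] peak_pos p_nonneg[OF G] by (simp add: ennreal_mult)
  also have "peak * (p (deficit x) * exp (- deficit x)) = indicator {t<..} x * f x * p (deficit x)"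
    using True peak_exp_deficit[of x] by (simp add: algebra_simps)
  finally show ?thesis using True by simp
qed (use nonneg in \<open>auto simp: less_le\<close>)

lemma tail_integral_layer_cake:
  fixes k p :: "real \<Rightarrow> real"
  assumes [measurable]: "k \<in> borel_measurable borel" "p \<in> borel_measurable borel"
    and k_nonneg: "\<And>u. 0 \<le> u \<Longrightarrow> 0 \<le> k u" and p_nonneg: "\<And>w. 0 \<le> w \<Longrightarrow> 0 \<le> p w"
    and tail: "\<And>w. 0 \<le> w \<Longrightarrow>
      (\<integral>\<^sup>+u. indicator {w..} u * ennreal (k u) \<partial>lborel) = ennreal (p w * exp (- w))"
    and integrable: "integrable lborel (\<lambda>u. indicator {0..} u * k u * level_length u)"
  shows "integrable lborel (\<lambda>x. indicator {t<..} x * f x * p (deficit x))"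
    and "(\<integral>x. indicator {t<..} x * f x * p (deficit x) \<partial>lborel)
           = peak * (\<integral>u. indicator {0..} u * k u * level_length u \<partial>lborel)"
proof -
  let ?g = "\<lambda>x. indicator {t<..} x * f x * p (deficit x)"
  have g_nonneg: "0 \<le> ?g x" for x
    using nonneg[of x] deficit_nonneg[of x] p_nonneg[of "deficit x"]
    by (cases "t < x \<and> 0 < f x") (auto simp: less_le)
  have layers: "ennreal (?g x) = indicator {x. t < x \<and> 0 < f x} x
      * (\<integral>\<^sup>+u. indicator {deficit x..} u * ennreal (peak * k u) \<partial>lborel)" for x
    by (rule ennreal_tail_weight_eq_layers[OF assms(1) p_nonneg tail])
  have "(\<integral>\<^sup>+x. ennreal (?g x) \<partial>lborel)
      = (\<integral>\<^sup>+u. indicator {0..} u * ennreal (peak * k u) * emeasure lborel (superlevel u) \<partial>lborel)"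
    unfolding layers superlevel_eq_deficit_le
    by (rule nn_integral_layer_cake) (auto simp: deficit_nonneg)
  also have "\<dots> = (\<integral>\<^sup>+u. ennreal (peak * (indicator {0..} u * k u * level_length u)) \<partial>lborel)"
    using k_nonneg level_length_nonneg peak_pos
    by (intro nn_integral_cong) (auto simp: emeasure_superlevel ennreal_mult mult.assoc split: split_indicator)
  also have "\<dots> = ennreal (peak * (\<integral>u. indicator {0..} u * k u * level_length u \<partial>lborel))"
    using k_nonneg level_length_nonneg peak_pos integrable
    by (subst nn_integral_eq_integral) (auto split: split_indicator)
  finally have nn: "(\<integral>\<^sup>+x. ennreal (?g x) \<partial>lborel)
      = ennreal (peak * (\<integral>u. indicator {0..} u * k u * level_length u \<partial>lborel))" .
  show "integrable lborel ?g"
    using nn g_nonneg by (intro integrableI_nn_integral_finite) auto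
  show "(\<integral>x. ?g x \<partial>lborel) = peak * (\<integral>u. indicator {0..} u * k u * level_length u \<partial>lborel)"
    using nn g_nonneg peak_pos k_nonneg level_length_nonneg
    by (subst integral_eq_nn_integral)
      (auto intro!: mult_nonneg_nonneg integral_nonneg_AE split: split_indicator)
qed

lemmas integral_level_length_kernels =
  integral_kernel_sq_le_kernel_lin[OF concave_level_length mono_level_length level_length_nonneg]

lemma tail_layer_cake_kernel_sq:
  "integrable lborel (\<lambda>x. indicator {t<..} x * f x * ((deficit x)\<^sup>2 + 2 * deficit x + 4))"
  "(\<integral>x. indicator {t<..} x * f x * ((deficit x)\<^sup>2 + 2 * deficit x + 4) \<partial>lborel)
     = peak * (\<integral>u. indicator {0..} u * kernel_sq u * level_length u \<partial>lborel)"
proof -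
  have "(\<lambda>w::real. w\<^sup>2 + 2 * w + 4) \<in> borel_measurable borel" by measurable
  note layer_cake = tail_integral_layer_cake[OF kernel_sq_measurable this]
  show "integrable lborel (\<lambda>x. indicator {t<..} x * f x * ((deficit x)\<^sup>2 + 2 * deficit x + 4))"
    by (rule layer_cake) (simp_all add: kernel_sq_nonneg nn_integral_tail_kernel_sq integral_level_length_kernels)
  show "(\<integral>x. indicator {t<..} x * f x * ((deficit x)\<^sup>2 + 2 * deficit x + 4) \<partial>lborel)
     = peak * (\<integral>u. indicator {0..} u * kernel_sq u * level_length u \<partial>lborel)"
    by (rule layer_cake) (simp_all add: kernel_sq_nonneg nn_integral_tail_kernel_sq integral_level_length_kernels)
qed

lemma tail_layer_cake_kernel_lin:
  "(\<integral>x. indicator {t<..} x * f x * (4 * deficit x + 4) \<partial>lborel)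
     = peak * (\<integral>u. indicator {0..} u * kernel_lin u * level_length u \<partial>lborel)"
proof -
  have "(\<lambda>w::real. 4 * w + 4) \<in> borel_measurable borel" by measurable
  then show ?thesis
    by (rule tail_integral_layer_cake[OF kernel_lin_measurable])
      (simp_all add: kernel_lin_nonneg nn_integral_tail_kernel_lin integral_level_length_kernels)
qed

lemma integrable_tail_deficit_power:
  assumes "j \<le> 2"
  shows "integrable lborel (\<lambda>x. indicator {t<..} x * f x * deficit x ^ j)"
proof (rule Bochner_Integration.integrable_bound[OF tail_layer_cake_kernel_sq(1)])
  show "AE x in lborel. norm (indicator {t<..} x * f x * deficit x ^ j)
      \<le> norm (indicator {t<..} x * f x * ((deficit x)\<^sup>2 + 2 * deficit x + 4))"
  proof (intro AE_I2)
    fix x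
    show "norm (indicator {t<..} x * f x * deficit x ^ j)
      \<le> norm (indicator {t<..} x * f x * ((deficit x)\<^sup>2 + 2 * deficit x + 4))"
    proof (cases "t < x \<and> 0 < f x")
      case True
      then have G: "0 \<le> deficit x" by (intro deficit_nonneg) auto
      have "deficit x ^ j \<le> (deficit x)\<^sup>2 + 2 * deficit x + 4"
        using assms G by (auto simp: le_Suc_eq numeral_2_eq_2 power2_eq_square)
      then show ?thesis using True G by (simp add: abs_mult mult_left_mono)
    qed (use nonneg in \<open>auto simp: less_le\<close>)
  qed
qed simp

lemma integral_tail_density: "(\<integral>x. indicator {t<..} x * f x \<partial>lborel) = S"
proof -
  have "(\<integral>\<^sup>+x. ennreal (indicator {t<..} x * f x) \<partial>lborel) = ennreal S"
    unfolding tail_mass[symmetric] by (intro nn_integral_cong) (simp split: split_indicator)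
  then show ?thesis
    using nonneg tail_mass_pos by (subst integral_eq_nn_integral) auto
qed

lemma tail_deficit_second_moment_le:
  "(\<integral>x. indicator {t<..} x * f x * (deficit x)\<^sup>2 \<partial>lborel)
     \<le> 2 * (\<integral>x. indicator {t<..} x * f x * deficit x \<partial>lborel)"
proof -
  let ?I = "\<lambda>j. \<integral>x. indicator {t<..} x * f x * deficit x ^ j \<partial>lborel"
  have int: "integrable lborel (\<lambda>x. indicator {t<..} x * f x * deficit x ^ j)" if "j \<le> 2" for j
    using integrable_tail_deficit_power[OF that] .
  have "(\<lambda>x. indicator {t<..} x * f x * ((deficit x)\<^sup>2 + 2 * deficit x + 4))
      = (\<lambda>x. indicator {t<..} x * f x * deficit x ^ 2 + 2 * (indicator {t<..} x * f x * deficit x ^ 1)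
          + 4 * (indicator {t<..} x * f x * deficit x ^ 0))"
    by (simp add: fun_eq_iff algebra_simps)
  then have "?I 2 + 2 * ?I 1 + 4 * ?I 0
      = (\<integral>x. indicator {t<..} x * f x * ((deficit x)\<^sup>2 + 2 * deficit x + 4) \<partial>lborel)"
    using int[of 0] int[of 1] int[of 2] by simp
  also have "\<dots> \<le> (\<integral>x. indicator {t<..} x * f x * (4 * deficit x + 4) \<partial>lborel)"
    unfolding tail_layer_cake_kernel_sq(2) tail_layer_cake_kernel_lin
    using integral_level_length_kernels(3) peak_pos by simp
  also have "(\<lambda>x. indicator {t<..} x * f x * (4 * deficit x + 4))
      = (\<lambda>x. 4 * (indicator {t<..} x * f x * deficit x ^ 1) + 4 * (indicator {t<..} x * f x * deficit x ^ 0))"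
    by (simp add: fun_eq_iff algebra_simps)
  also have "(\<integral>x. 4 * (indicator {t<..} x * f x * deficit x ^ 1) + 4 * (indicator {t<..} x * f x * deficit x ^ 0) \<partial>lborel)
      = 4 * ?I 1 + 4 * ?I 0"
    using int[of 0] int[of 1] by simp
  finally show ?thesis by simp
qed

lemma tail_log_density_eq:
  "indicator {t<..} x * f x * ln (f x / S) = indicator {t<..} x * f x * (ln (peak / S) - deficit x)"
  "indicator {t<..} x * f x * (ln (f x / S))\<^sup>2
     = indicator {t<..} x * f x * (ln (peak / S) - deficit x)\<^sup>2"
proof -
  have eq: "f x * ln (f x / S) = f x * (ln (peak / S) - deficit x)"
    using peak_pos tail_mass_pos nonneg[of x]
    by (cases "f x = 0") (simp_all add: deficit_def ln_div)
  then show "indicator {t<..} x * f x * ln (f x / S)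
      = indicator {t<..} x * f x * (ln (peak / S) - deficit x)"
    by (simp add: mult.assoc)
  have "f x * (ln (f x / S))\<^sup>2 = ln (f x / S) * (f x * ln (f x / S))"
    by (simp add: power2_eq_square mult_ac)
  also have "\<dots> = ln (f x / S) * (f x * (ln (peak / S) - deficit x))"
    by (simp only: eq)
  also have "\<dots> = (ln (peak / S) - deficit x) * (f x * ln (f x / S))"
    by (simp add: mult_ac)
  also have "\<dots> = (ln (peak / S) - deficit x) * (f x * (ln (peak / S) - deficit x))"
    by (simp only: eq)
  also have "\<dots> = f x * (ln (peak / S) - deficit x)\<^sup>2"
    by (simp add: power2_eq_square mult_ac)
  finally show "indicator {t<..} x * f x * (ln (f x / S))\<^sup>2
      = indicator {t<..} x * f x * (ln (peak / S) - deficit x)\<^sup>2"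
    by (simp add: mult.assoc)
qed

lemma tail_log_density_variance_le_one:
  shows "integrable lborel (\<lambda>x. indicator {t<..} x * f x * ln (f x / S))"
    and "integrable lborel (\<lambda>x. indicator {t<..} x * f x * (ln (f x / S))\<^sup>2)"
    and "(\<integral>x. indicator {t<..} x * f x * (ln (f x / S))\<^sup>2 \<partial>lborel) / S
           - ((\<integral>x. indicator {t<..} x * f x * ln (f x / S) \<partial>lborel) / S)\<^sup>2 \<le> 1"
proof -
  define c where "c = ln (peak / S)"
  let ?F = "\<lambda>x. indicator {t<..} x * f x"
  let ?I1 = "\<integral>x. ?F x * deficit x \<partial>lborel"
  let ?I2 = "\<integral>x. ?F x * (deficit x)\<^sup>2 \<partial>lborel"
  have int0: "integrable lborel ?F" and int1: "integrable lborel (\<lambda>x. ?F x * deficit x)"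
    and int2: "integrable lborel (\<lambda>x. ?F x * (deficit x)\<^sup>2)"
    using integrable_tail_deficit_power[of 0] integrable_tail_deficit_power[of 1]
      integrable_tail_deficit_power[of 2] by simp_all
  have lin: "?F x * ln (f x / S) = c * ?F x - ?F x * deficit x" for x
    unfolding tail_log_density_eq c_def by (simp add: algebra_simps)
  have sq: "?F x * (ln (f x / S))\<^sup>2 = c\<^sup>2 * ?F x - 2 * c * (?F x * deficit x) + ?F x * (deficit x)\<^sup>2" for x
    unfolding tail_log_density_eq c_def by (simp add: algebra_simps power2_eq_square)
  show "integrable lborel (\<lambda>x. ?F x * ln (f x / S))"
    unfolding lin using int0 int1 by simp
  show "integrable lborel (\<lambda>x. ?F x * (ln (f x / S))\<^sup>2)"
    unfolding sq using int0 int1 int2 by simp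
  have v1: "(\<integral>x. ?F x * ln (f x / S) \<partial>lborel) = c * S - ?I1"
    unfolding lin using int0 int1 integral_tail_density by simp
  have v2: "(\<integral>x. ?F x * (ln (f x / S))\<^sup>2 \<partial>lborel) = c\<^sup>2 * S - 2 * c * ?I1 + ?I2"
    unfolding sq using int0 int1 int2 integral_tail_density by simp
  have "(c\<^sup>2 * S - 2 * c * ?I1 + ?I2) / S - ((c * S - ?I1) / S)\<^sup>2 = ?I2 / S - (?I1 / S)\<^sup>2"
    using tail_mass_pos by (simp add: field_simps power2_eq_square)
  also have "\<dots> \<le> 2 * (?I1 / S) - (?I1 / S)\<^sup>2"
    using tail_deficit_second_moment_le tail_mass_pos by (simp add: divide_right_mono)
  also have "\<dots> \<le> 1"
    using zero_le_power2[of "?I1 / S - 1"] by (simp add: power2_eq_square algebra_simps)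
  finally show "(\<integral>x. ?F x * (ln (f x / S))\<^sup>2 \<partial>lborel) / S - ((\<integral>x. ?F x * ln (f x / S) \<partial>lborel) / S)\<^sup>2 \<le> 1"
    unfolding v1 v2 .
qed

end

section \<open>Conditioning on \<open>X > t\<close>\<close>

lemma uniform_measure_eq_density:
  assumes "E \<in> sets M" "emeasure M E = ennreal S" "0 < S"
  shows "uniform_measure M E = density M (\<lambda>\<omega>. ennreal (indicator E \<omega> / S))"
  unfolding uniform_measure_def assms(2)
  using divide_ennreal[of 1 S] assms(1,3) by (intro density_cong) (auto split: split_indicator)

lemma integral_uniform_measure_distributed:
  fixes f \<phi> :: "real \<Rightarrow> real"
  assumes distr: "distributed M lborel X (\<lambda>x. ennreal (f x))" and nonneg: "\<And>x. 0 \<le> f x"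
    and mass: "emeasure M {\<omega> \<in> space M. t < X \<omega>} = ennreal S" "0 < S"
    and [measurable]: "\<phi> \<in> borel_measurable borel"
  shows "integrable (uniform_measure M {\<omega> \<in> space M. t < X \<omega>}) (\<lambda>\<omega>. \<phi> (X \<omega>))
      \<longleftrightarrow> integrable lborel (\<lambda>x. indicator {t<..} x * f x * \<phi> x)"
    and "(\<integral>\<omega>. \<phi> (X \<omega>) \<partial>uniform_measure M {\<omega> \<in> space M. t < X \<omega>})
      = (\<integral>x. indicator {t<..} x * f x * \<phi> x \<partial>lborel) / S"
proof -
  let ?E = "{\<omega> \<in> space M. t < X \<omega>}"
  have [measurable]: "X \<in> borel_measurable M"
    using distributed_measurable[OF distr] by (simp add: measurable_cong_sets[OF refl sets_lborel])
  have uniform: "uniform_measure M ?E = density M (\<lambda>\<omega>. ennreal (indicator ?E \<omega> / S))"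
    by (intro uniform_measure_eq_density mass) measurable
  define \<psi> where "\<psi> x = indicator {t<..} x / S * \<phi> x" for x
  have [measurable]: "\<psi> \<in> borel_measurable lborel" unfolding \<psi>_def by measurable
  have weight: "\<omega> \<in> space M \<Longrightarrow> (indicator ?E \<omega> / S) *\<^sub>R \<phi> (X \<omega>) = \<psi> (X \<omega>)" for \<omega>
    by (simp add: \<psi>_def split: split_indicator)
  have rescale: "(\<lambda>x. f x * \<psi> x) = (\<lambda>x. indicator {t<..} x * f x * \<phi> x * (1 / S))"
    by (auto simp: \<psi>_def)
  have "integrable (uniform_measure M ?E) (\<lambda>\<omega>. \<phi> (X \<omega>))
      \<longleftrightarrow> integrable M (\<lambda>\<omega>. (indicator ?E \<omega> / S) *\<^sub>R \<phi> (X \<omega>))"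
    unfolding uniform by (rule integrable_density) (use mass in \<open>auto intro!: AE_I2 split: split_indicator\<close>)
  also have "\<dots> \<longleftrightarrow> integrable M (\<lambda>\<omega>. \<psi> (X \<omega>))"
    using weight by (intro Bochner_Integration.integrable_cong) auto
  also have "\<dots> \<longleftrightarrow> integrable lborel (\<lambda>x. f x * \<psi> x)"
    by (rule distributed_integrable[OF distr, symmetric]) (auto simp: nonneg)
  finally show "integrable (uniform_measure M ?E) (\<lambda>\<omega>. \<phi> (X \<omega>))
      \<longleftrightarrow> integrable lborel (\<lambda>x. indicator {t<..} x * f x * \<phi> x)"
    unfolding rescale using mass by (simp only: integrable_mult_right_iff) simp
  have "(\<integral>\<omega>. \<phi> (X \<omega>) \<partial>uniform_measure M ?E) = (\<integral>\<omega>. (indicator ?E \<omega> / S) *\<^sub>R \<phi> (X \<omega>) \<partial>M)"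
    unfolding uniform by (rule integral_density) (use mass in \<open>auto intro!: AE_I2 split: split_indicator\<close>)
  also have "\<dots> = (\<integral>\<omega>. \<psi> (X \<omega>) \<partial>M)"
    using weight by (intro Bochner_Integration.integral_cong) auto
  also have "\<dots> = (\<integral>x. f x * \<psi> x \<partial>lborel)"
    by (rule distributed_integral[OF distr, symmetric]) (auto simp: nonneg)
  finally show "(\<integral>\<omega>. \<phi> (X \<omega>) \<partial>uniform_measure M ?E) = (\<integral>x. indicator {t<..} x * f x * \<phi> x \<partial>lborel) / S"
    unfolding rescale by simp
qed

lemma nn_integral_distributed_tail:
  fixes f :: "real \<Rightarrow> real"
  assumes "distributed M lborel X (\<lambda>x. ennreal (f x))"
  shows "(\<integral>\<^sup>+x. ennreal (f x) * indicator {t<..} x \<partial>lborel) = emeasure M {\<omega> \<in> space M. t < X \<omega>}"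
proof -
  have "X -` {t<..} \<inter> space M = {\<omega> \<in> space M. t < X \<omega>}" by auto
  then show ?thesis using distributed_emeasure[OF assms, of "{t<..}"] by simp
qed

lemma variance_uniform_measure_distributed:
  fixes f \<phi> :: "real \<Rightarrow> real"
  assumes distr: "distributed M lborel X (\<lambda>x. ennreal (f x))" and nonneg: "\<And>x. 0 \<le> f x"
    and mass: "emeasure M {\<omega> \<in> space M. t < X \<omega>} = ennreal S" "0 < S"
    and [measurable]: "\<phi> \<in> borel_measurable borel"
    and int1: "integrable lborel (\<lambda>x. indicator {t<..} x * f x * \<phi> x)"
    and int2: "integrable lborel (\<lambda>x. indicator {t<..} x * f x * (\<phi> x)\<^sup>2)"
  shows "integrable (uniform_measure M {\<omega> \<in> space M. t < X \<omega>}) (\<lambda>\<omega>. (\<phi> (X \<omega>))\<^sup>2)"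
    and "prob_space.variance (uniform_measure M {\<omega> \<in> space M. t < X \<omega>}) (\<lambda>\<omega>. \<phi> (X \<omega>))
      = (\<integral>x. indicator {t<..} x * f x * (\<phi> x)\<^sup>2 \<partial>lborel) / S
        - ((\<integral>x. indicator {t<..} x * f x * \<phi> x \<partial>lborel) / S)\<^sup>2"
proof -
  note conditional = integral_uniform_measure_distributed[OF distr nonneg mass]
  have "prob_space (uniform_measure M {\<omega> \<in> space M. t < X \<omega>})"
    using mass by (intro prob_space_uniform_measure) auto
  moreover have "integrable (uniform_measure M {\<omega> \<in> space M. t < X \<omega>}) (\<lambda>\<omega>. \<phi> (X \<omega>))"
    using conditional(1)[of \<phi>] int1 by simp
  moreover show "integrable (uniform_measure M {\<omega> \<in> space M. t < X \<omega>}) (\<lambda>\<omega>. (\<phi> (X \<omega>))\<^sup>2)"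
    using conditional(1)[of "\<lambda>x. (\<phi> x)\<^sup>2"] int2 by simp
  ultimately have "prob_space.variance (uniform_measure M {\<omega> \<in> space M. t < X \<omega>}) (\<lambda>\<omega>. \<phi> (X \<omega>))
      = (\<integral>\<omega>. (\<phi> (X \<omega>))\<^sup>2 \<partial>uniform_measure M {\<omega> \<in> space M. t < X \<omega>})
        - (\<integral>\<omega>. \<phi> (X \<omega>) \<partial>uniform_measure M {\<omega> \<in> space M. t < X \<omega>})\<^sup>2"
    by (rule prob_space.variance_eq)
  then show "prob_space.variance (uniform_measure M {\<omega> \<in> space M. t < X \<omega>}) (\<lambda>\<omega>. \<phi> (X \<omega>))
      = (\<integral>x. indicator {t<..} x * f x * (\<phi> x)\<^sup>2 \<partial>lborel) / S
        - ((\<integral>x. indicator {t<..} x * f x * \<phi> x \<partial>lborel) / S)\<^sup>2"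
    using conditional(2)[of \<phi>] conditional(2)[of "\<lambda>x. (\<phi> x)\<^sup>2"] by simp
qed

theorem theorem3p8:
  fixes M :: "'a measure" and X :: "'a \<Rightarrow> real" and f :: "real \<Rightarrow> real"
  assumes "prob_space M"
    and "\<And>x. 0 \<le> f x"
    and "f \<in> borel_measurable lborel"
    and "distributed M lborel X (\<lambda>x. ennreal (f x))"
    and "\<forall>\<omega>\<in>space M. 0 \<le> X \<omega>"
    and "log_concave_on {0<..} f"
    and "t \<in> surv_support M X"
  shows "integrable (cond_space M X t) (\<lambda>\<omega>. (residual_info M X f t \<omega>)\<^sup>2)
    \<and> residual_varentropy M X f t \<le> 1"
proof -
  interpret prob_space M by fact
  define S where "S = surv M X t"
  have t: "0 \<le> t" and S: "0 < S" using assms(7) by (auto simp: surv_support_def S_def)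
  have mass: "emeasure M {\<omega> \<in> space M. t < X \<omega>} = ennreal S"
    by (simp add: S_def surv_def emeasure_eq_measure)
  interpret log_concave_tail f t S
    using assms(2,3,6) t S nn_integral_distributed_tail[OF assms(4)] mass
    by unfold_locales (auto simp: measurable_cong_sets[OF sets_lborel refl] elim: log_concave_on_subset)
  have info: "residual_info M X f t = (\<lambda>\<omega>. ln (f (X \<omega>) / S))"
    by (auto simp: residual_info_def residual_pdf_def residual_lifetime_def S_def)
  show ?thesis
    unfolding residual_varentropy_def cond_space_def info
    using variance_uniform_measure_distributed[OF assms(4,2) mass S _ tail_log_density_variance_le_one(1,2)]
      tail_log_density_variance_le_one(3) by simp
qed

end
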